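(* Assume $f(0)>\frac34$. There exist $U<0$ and constants $0<c\le C$ such that the following holds for every $u_0<U$, every $s\in[0,1]$ and every smooth function $\phi$ on $\overline{\Omega_{u_0}}$ (up to $R=0$): $$c\,I_s(\phi)\le\mathcal E_{\mathcal H_{s,u_0}}(\phi)\le C\,I_s(\phi),$$ where $$I_s(\phi)=\int_{]-\infty,u_0[\times S^2}\Big(u^2(\partial_u\phi)^2+\frac{R}{|u|}(\partial_R\phi)^2+|\nabla_{S^2}\phi|^2\Big)du\,d^2\omega,$$ the integrand being evaluated on $\mathcal H_{s,u_0}$.
   Context: Let $a>0$ and let $f$ be an analytic positive function on $[0,a)$. On a manifold with coordinates $(u,R,\omega)\in\mathbb R\times[0,a)\times S^2$ consider $$\hat g=R^2f(R)\,du^2-2\,du\,dR-d\omega^2,$$ with future null infinity $\mathscr I^+=\{R=0\}$ and the time orientation in which $\partial_u$ is future-directed on $\mathscr I^+$. Put $r=1/R$, fix $r_*$ with $\frac{dr_*}{dr}=\frac1{f(1/r)}$, and set $t=u+r_*$. Regions, for $u_0<0$: - $\Omega_{u_0}=\{t\ge0\}\cap\{u<u_0\}$; - for $0<s\le1$, $\mathcal H_{s,u_0}=\{u=-sr_*\}\cap\{u<u_0\}$; - $\mathcal H_{0,u_0}=\{R=0,\ u<u_0\}$. Each $\mathcal H_{s,u_0}$ is parametrised by $(u,\omega)$. $d^2\omega$ and $\nabla_{S^2}$ are the area form and gradient of the unit sphere. Energy flux. Let $T_{ab}(\phi)=\hat\nabla_a\phi\hat\nabla_b\phi-\frac12\hat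 g^{cd}\hat\nabla_c\phi\hat\nabla_d\phi\,\hat g_{ab}$ and $K=u^2\partial_u-2(1+uR)\partial_R$. The flux $\mathcal E_\Sigma(\phi)=\int_\Sigma K^bT_{ab}(\phi)\tilde n^a\,d\mu$ uses: - a future-directed normal $\tilde n$ to $\Sigma$; - a transverse $\tilde l$ with $\hat g(\tilde l,\tilde n)=1$; - the positive measure $d\mu$ induced by $\tilde l\lrcorner(du\wedge dR\wedge d^2\omega)$. Explicitly, for $0<s\le1$, the integrand being evaluated on $\mathcal H_{s,u_0}$: $$\mathcal E_{\mathcal H_{s,u_0}}(\phi)=\int_{]-\infty,u_0[\times S^2}\Big(R^2u^2f(R)\,\partial_u\phi\,\partial_R\phi+u^2(\partial_u\phi)^2$$ $$+\Big(\frac{R^4u^2f(R)^2}{2s}+R^3f(R)(2-s)\frac us+\frac{R^2f(R)(2-s)}{s}\Big)(\partial_R\phi)^2$$ $$+\Big(\frac{R^2u^2f(R)}{2s}+Ru+1\Big)|\nabla_{S^2}\phi|^2\Big)du\,d^2\omega.$$ For $s=0$: $$\mathcal E_{\mathcal H_{0,u_0}}(\phi)=\int_{]-\infty,u_0[\times S^2}\big(u^2(\partial_u\phi)^2+|\nabla_{S^2}\phi|^2\big)du\,d^2\omega.$$ *)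

theory Defs
  imports "HOL-Analysis.Analysis"
begin

definition real_analytic_on :: "real set \<Rightarrow> (real \<Rightarrow> real) \<Rightarrow> bool" where
  "real_analytic_on A g \<longleftrightarrow>
     (\<forall>x\<in>A. \<exists>\<delta>>0. \<exists>c::nat \<Rightarrow> real.
        \<forall>y\<in>A. \<bar>y - x\<bar> < \<delta> \<longrightarrow> (\<lambda>n. c n * (y - x) ^ n) sums g y)"

text \<open>C-infinity on an open set S of a euclidean space: differentiable, and all
  partial derivatives are again C-infinity (coinductively, so all iterated
  partial derivatives exist).\<close>
coinductive smooth_on :: "'a::euclidean_space set \<Rightarrow> ('a \<Rightarrow> real) \<Rightarrow> bool" for S where
  "\<lbrakk>\<forall>x\<in>S. g differentiable (at x);
    \<forall>b\<in>Basis. smooth_on S (\<lambda>x. frechet_derivative g (at x) b)\<rbrakk> \<Longrightarrow> smooth_on S g"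

text \<open>Points are (u, R, x) with x in R^3; the sphere S^2 is the unit sphere.\<close>
type_synonym point = "real \<times> real \<times> (real^3)"

definition sph :: "real \<Rightarrow> real \<Rightarrow> real^3" where
  "sph \<theta> \<psi> = vector [sin \<theta> * cos \<psi>, sin \<theta> * sin \<psi>, cos \<theta>]"

text \<open>Closure of Omega_{u0} (within the manifold R x [0,a) x S^2),
  including the piece R = 0 of future null infinity.\<close>
definition Omega_closure :: "real \<Rightarrow> (real \<Rightarrow> real) \<Rightarrow> real \<Rightarrow> point set" where
  "Omega_closure a rs u0 =
     {(u, R, x). x \<in> sphere 0 1 \<and> u \<le> u0 \<and> 0 \<le> R \<and> R < a \<and>
                 (R = 0 \<or> u + rs (1 / R) \<ge> 0)}"

text \<open>The R-coordinate of the point of H_{s,u0} above a given u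
  (H_s = {u = - s r_*}, r = 1/R; H_0 = {R = 0}).\<close>
definition R_on_H :: "real \<Rightarrow> (real \<Rightarrow> real) \<Rightarrow> real \<Rightarrow> real \<Rightarrow> real" where
  "R_on_H a rs s u =
     (if s = 0 then 0 else (THE R. 0 < R \<and> R < a \<and> u = - s * rs (1 / R)))"

definition d_u :: "(point \<Rightarrow> real) \<Rightarrow> real \<Rightarrow> real \<Rightarrow> real^3 \<Rightarrow> real" where
  "d_u \<phi> u R x = deriv (\<lambda>v. \<phi> (v, R, x)) u"

definition d_R :: "(point \<Rightarrow> real) \<Rightarrow> real \<Rightarrow> real \<Rightarrow> real^3 \<Rightarrow> real" where
  "d_R \<phi> u R x = deriv (\<lambda>v. \<phi> (u, v, x)) R"

definition grad_S2_sq :: "(point \<Rightarrow> real) \<Rightarrow> real \<Rightarrow> real \<Rightarrow> real \<Rightarrow> real \<Rightarrow> real" where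
  "grad_S2_sq \<phi> u R \<theta> \<psi> =
     (deriv (\<lambda>t. \<phi> (u, R, sph t \<psi>)) \<theta>)\<^sup>2
     + (deriv (\<lambda>p. \<phi> (u, R, sph \<theta> p)) \<psi>)\<^sup>2 / (sin \<theta>)\<^sup>2"

text \<open>Energy density (integrand of E_{H_{s,u0}}) at parameters s, u, R, with
  a = d_u phi, b = d_R phi, g = |grad_S2 phi|^2.\<close>
definition energy_density ::
  "(real \<Rightarrow> real) \<Rightarrow> real \<Rightarrow> real \<Rightarrow> real \<Rightarrow> real \<Rightarrow> real \<Rightarrow> real \<Rightarrow> real" where
  "energy_density f s u R a b g =
     (if s = 0 then u\<^sup>2 * a\<^sup>2 + g
      else R\<^sup>2 * u\<^sup>2 * f R * a * b + u\<^sup>2 * a\<^sup>2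
         + (R ^ 4 * u\<^sup>2 * (f R)\<^sup>2 / (2 * s) + R ^ 3 * f R * (2 - s) * u / s
            + R\<^sup>2 * f R * (2 - s) / s) * b\<^sup>2
         + (R\<^sup>2 * u\<^sup>2 * f R / (2 * s) + R * u + 1) * g)"

definition E_integrand ::
  "real \<Rightarrow> (real \<Rightarrow> real) \<Rightarrow> (real \<Rightarrow> real) \<Rightarrow> real \<Rightarrow> (point \<Rightarrow> real)
     \<Rightarrow> real \<times> real \<times> real \<Rightarrow> real" where
  "E_integrand a f rs s \<phi> = (\<lambda>(u, \<theta>, \<psi>).
     (let R = R_on_H a rs s u; x = sph \<theta> \<psi> in
      energy_density f s u R (d_u \<phi> u R x) (d_R \<phi> u R x) (grad_S2_sq \<phi> u R \<theta> \<psi>))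
     * sin \<theta>)"

definition I_integrand ::
  "real \<Rightarrow> (real \<Rightarrow> real) \<Rightarrow> real \<Rightarrow> (point \<Rightarrow> real) \<Rightarrow> real \<times> real \<times> real \<Rightarrow> real" where
  "I_integrand a rs s \<phi> = (\<lambda>(u, \<theta>, \<psi>).
     (let R = R_on_H a rs s u; x = sph \<theta> \<psi> in
      u\<^sup>2 * (d_u \<phi> u R x)\<^sup>2 + R / \<bar>u\<bar> * (d_R \<phi> u R x)\<^sup>2 + grad_S2_sq \<phi> u R \<theta> \<psi>)
     * sin \<theta>)"

definition param_dom :: "real \<Rightarrow> (real \<times> real \<times> real) set" where
  "param_dom u0 = {..<u0} \<times> {0<..<pi} \<times> {0<..<2 * pi}"

definition ext_integral :: "(real \<times> real \<times> real) set \<Rightarrow> (real \<times> real \<times> real \<Rightarrow> real) \<Rightarrow> ereal" where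
  "ext_integral D h =
     enn2ereal (\<integral>\<^sup>+ p \<in> D. ennreal (h p) \<partial>lborel)
     - enn2ereal (\<integral>\<^sup>+ p \<in> D. ennreal (- h p) \<partial>lborel)"

definition energy_flux :: "real \<Rightarrow> (real \<Rightarrow> real) \<Rightarrow> (real \<Rightarrow> real) \<Rightarrow> real \<Rightarrow> real
     \<Rightarrow> (point \<Rightarrow> real) \<Rightarrow> ereal" where
  "energy_flux a f rs s u0 \<phi> = ext_integral (param_dom u0) (E_integrand a f rs s \<phi>)"

definition I_norm :: "real \<Rightarrow> (real \<Rightarrow> real) \<Rightarrow> real \<Rightarrow> real \<Rightarrow> (point \<Rightarrow> real) \<Rightarrow> ereal" where
  "I_norm a rs s u0 \<phi> = enn2ereal (\<integral>\<^sup>+ p \<in> param_dom u0. ennreal (I_integrand a rs s \<phi> p) \<partial>lborel)"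

end

theory Submission
  imports Defs
begin

(*
  A point of H_s with s > 0 has u = -s r_*(r) and R = 1/r, and r_*(r) ~ r / f(0) as r \<rightarrow> \<infinity>
  (L'Hospital). In the variables X = u \<partial>_u \<phi>, Z = R \<partial>_R \<phi>, with t = r_* f(R) / r \<rightarrow> 1 and
  p = f(R) \<rightarrow> f(0), s times the energy density becomes
    s X^2 - s^2 t X Z + (s^2 t^2/2 - s t (2 - s) + p (2 - s)) Z^2 + s (s t^2/(2p) - s t/p + 1) |\<nabla>\<phi>|^2
  and s times the density of I_s becomes s X^2 + (p/t) Z^2 + s |\<nabla>\<phi>|^2. At t = 1, p = f(0) the
  (X, Z)-part is positive definite uniformly in s \<in> ]0,1] because f(0) > 3/4 (at s = 1 its
  determinant is proportional to 4 f(0) - 3). Hence, once u is negative enough for t and p to be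
  close to their limits, the two densities are comparable with constants independent of s; on H_0
  they coincide. Integrating over ]-\<infinity>,u0[ \<times> S^2 gives the claim.
*)

(* Unlike nn_integral_cmult, no measurability is needed: \<phi> is arbitrary, so the integrands of the
   theorem need not be measurable. *)
lemma nn_integral_cmult_le:
  fixes c :: ennreal
  shows "c * integral\<^sup>N M f \<le> (\<integral>\<^sup>+ x. c * f x \<partial>M)"
  unfolding nn_integral_def SUP_mult_left_ennreal
proof (rule SUP_least)
  fix g assume "g \<in> {g. simple_function M g \<and> g \<le> f}"
  then have g: "simple_function M g" "g \<le> f" by auto
  have "c * integral\<^sup>S M g = integral\<^sup>S M (\<lambda>x. c * g x)"
    using g by simp
  also have "\<dots> \<le> (SUP h \<in> {h. simple_function M h \<and> h \<le> (\<lambda>x. c * f x)}. integral\<^sup>S M h)"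
    using g by (intro SUP_upper) (auto simp: le_fun_def intro: simple_function_compose1 mult_left_mono)
  finally show "c * integral\<^sup>S M g \<le> \<dots>" .
qed

lemma nn_integral_cmult_pos:
  fixes c :: real
  assumes "0 < c"
  shows "(\<integral>\<^sup>+ x. ennreal c * f x \<partial>M) = ennreal c * integral\<^sup>N M f"
proof (rule antisym)
  have inv: "ennreal c * ennreal (1 / c) = 1"
    using assms by (simp add: ennreal_mult[symmetric])
  have "(\<integral>\<^sup>+ x. ennreal c * f x \<partial>M) = ennreal c * (ennreal (1 / c) * (\<integral>\<^sup>+ x. ennreal c * f x \<partial>M))"
    by (simp add: mult.assoc[symmetric] inv)
  also have "\<dots> \<le> ennreal c * (\<integral>\<^sup>+ x. ennreal (1 / c) * (ennreal c * f x) \<partial>M)"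
    by (intro mult_left_mono nn_integral_cmult_le) simp
  also have "\<dots> = ennreal c * integral\<^sup>N M f"
    by (simp add: mult.assoc[symmetric] mult.commute[of "ennreal (1 / c)"] inv)
  finally show "(\<integral>\<^sup>+ x. ennreal c * f x \<partial>M) \<le> ennreal c * integral\<^sup>N M f" .
qed (rule nn_integral_cmult_le)

lemma ext_integral_comparable:
  fixes Ii Ei :: "real \<times> real \<times> real \<Rightarrow> real"
  assumes bounds: "\<And>p. p \<in> D \<Longrightarrow> c * Ii p \<le> Ei p \<and> Ei p \<le> C * Ii p"
    and "0 < c" "c < C"
  shows "ereal c * enn2ereal (\<integral>\<^sup>+ p \<in> D. ennreal (Ii p) \<partial>lborel) \<le> ext_integral D Ei"
    and "ext_integral D Ei \<le> ereal C * enn2ereal (\<integral>\<^sup>+ p \<in> D. ennreal (Ii p) \<partial>lborel)"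
proof -
  have nonneg: "0 \<le> Ii p" "0 \<le> Ei p" if "p \<in> D" for p
  proof -
    have "0 \<le> (C - c) * Ii p"
      using bounds[OF that] by (simp add: algebra_simps)
    then show "0 \<le> Ii p"
      using \<open>c < C\<close> by (simp add: zero_le_mult_iff)
    then show "0 \<le> Ei p"
      using bounds[OF that] \<open>0 < c\<close> by (smt (verit) mult_nonneg_nonneg)
  qed
  have "(\<integral>\<^sup>+ p \<in> D. ennreal (- Ei p) \<partial>lborel) = (\<integral>\<^sup>+ p. 0 \<partial>(lborel :: (real \<times> real \<times> real) measure))"
    by (intro nn_integral_cong) (auto simp: indicator_def ennreal_neg nonneg)
  then have ext: "ext_integral D Ei = enn2ereal (\<integral>\<^sup>+ p \<in> D. ennreal (Ei p) \<partial>lborel)"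
    by (simp add: ext_integral_def zero_ennreal.rep_eq)
  have scale: "ereal k * enn2ereal (\<integral>\<^sup>+ p \<in> D. ennreal (Ii p) \<partial>lborel)
      = enn2ereal (\<integral>\<^sup>+ p \<in> D. ennreal (k * Ii p) \<partial>lborel)" if "0 < k" for k
  proof -
    have "(\<integral>\<^sup>+ p \<in> D. ennreal (k * Ii p) \<partial>lborel) = (\<integral>\<^sup>+ p. ennreal k * (ennreal (Ii p) * indicator D p) \<partial>lborel)"
      using that nonneg by (intro nn_integral_cong) (auto simp: indicator_def ennreal_mult)
    also have "\<dots> = ennreal k * (\<integral>\<^sup>+ p \<in> D. ennreal (Ii p) \<partial>lborel)"
      using that by (rule nn_integral_cmult_pos)
    finally show ?thesis
      using that by (simp add: times_ennreal.rep_eq)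
  qed
  show "ereal c * enn2ereal (\<integral>\<^sup>+ p \<in> D. ennreal (Ii p) \<partial>lborel) \<le> ext_integral D Ei"
    unfolding ext scale[OF \<open>0 < c\<close>] less_eq_ennreal.rep_eq[symmetric]
    using bounds by (intro nn_integral_mono) (auto simp: indicator_def intro: ennreal_leI)
  show "ext_integral D Ei \<le> ereal C * enn2ereal (\<integral>\<^sup>+ p \<in> D. ennreal (Ii p) \<partial>lborel)"
    unfolding ext scale[OF order.strict_trans[OF \<open>0 < c\<close> \<open>c < C\<close>]] less_eq_ennreal.rep_eq[symmetric]
    using bounds by (intro nn_integral_mono) (auto simp: indicator_def intro: ennreal_leI)
qed

(* s times the energy density and the density of I_s on H_s, in the variables X = u \<partial>_u \<phi>,
   Z = R \<partial>_R \<phi>, g = |\<nabla>\<phi>|^2, with w = s, t = r_* f(R) / r and p = f(R); see energy_density_scaled. *)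
definition scaled_energy_density :: "real \<Rightarrow> real \<Rightarrow> real \<Rightarrow> real \<Rightarrow> real \<Rightarrow> real \<Rightarrow> real" where
  "scaled_energy_density w t p X Z g =
     w * X\<^sup>2 - w\<^sup>2 * t * X * Z + (w\<^sup>2 * t\<^sup>2 / 2 - w * t * (2 - w) + p * (2 - w)) * Z\<^sup>2
     + w * (w * t\<^sup>2 / (2 * p) - w * t / p + 1) * g"

definition scaled_I_density :: "real \<Rightarrow> real \<Rightarrow> real \<Rightarrow> real \<Rightarrow> real \<Rightarrow> real \<Rightarrow> real" where
  "scaled_I_density w t p X Z g = w * X\<^sup>2 + p / t * Z\<^sup>2 + w * g"

definition I_density :: "real \<Rightarrow> real \<Rightarrow> real \<Rightarrow> real \<Rightarrow> real \<Rightarrow> real" where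
  "I_density u R A B g = u\<^sup>2 * A\<^sup>2 + R / \<bar>u\<bar> * B\<^sup>2 + g"

lemma energy_density_at_scri: "energy_density f 0 u 0 A B g = I_density u 0 A B g"
  by (simp add: energy_density_def I_density_def)

lemma energy_density_scaled:
  fixes f :: "real \<Rightarrow> real"
  assumes "0 < w" "0 < R" "0 < p" "0 < t" "f R = p" "u * R = - (w * t / p)"
  shows "w * energy_density f w u R A B g = scaled_energy_density w t p (u * A) (R * B) g"
    and "w * I_density u R A B g = scaled_I_density w t p (u * A) (R * B) g"
proof -
  have u: "u = - (w * t) / (p * R)"
    using assms by (simp add: field_simps)
  then have abs_u: "\<bar>u\<bar> = w * t / (p * R)"
    using assms by simp
  show "w * I_density u R A B g = scaled_I_density w t p (u * A) (R * B) g"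
    unfolding I_density_def scaled_I_density_def abs_u
    using assms by (simp add: field_simps power2_eq_square)
  show "w * energy_density f w u R A B g = scaled_energy_density w t p (u * A) (R * B) g"
    using assms unfolding u
    by (simp add: energy_density_def scaled_energy_density_def field_simps power2_eq_square power3_eq_cube power4_eq_xxxx)
qed

lemma cubic_lower_bound:
  fixes w F d :: real
  assumes "0 \<le> w" "w \<le> 1" "1/4 \<le> d" "3/4 \<le> F"
  shows "F - 1/2 - d \<le> 3 * w\<^sup>2 / 2 - 2 * w + F * (2 - w) - d * w ^ 3"
proof -
  have "(w\<^sup>2 + w + 1) / 4 \<le> d * (w\<^sup>2 + w + 1)"
    using mult_right_mono[of "1/4" d "w\<^sup>2 + w + 1"] assms by simp
  then have "0 \<le> 2 + F - 3/2 * (w + 1) + d * (w\<^sup>2 + w + 1)"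
    using assms zero_le_power2[of w] by argo
  then have "0 \<le> (1 - w) * (2 + F - 3/2 * (w + 1) + d * (w\<^sup>2 + w + 1))"
    using assms by simp
  also have "\<dots> = 3 * w\<^sup>2 / 2 - 2 * w + F * (2 - w) - d * w ^ 3 - (F - 1/2 - d)"
    by (simp add: field_simps power2_eq_square power3_eq_cube)
  finally show ?thesis by simp
qed

context
  fixes F m e :: real
  assumes m_pos: "0 < m" and m_le_one: "m \<le> 1" and m_le_F: "m \<le> F - 3/4"
    and e_pos: "0 < e" and e_small: "20 * e \<le> m"
begin

lemma coefficient_perturbation:
  assumes w: "0 < w" "w \<le> 1" and t: "\<bar>t - 1\<bar> \<le> e" and p: "\<bar>p - F\<bar> \<le> e"
    and d: "0 \<le> d" "d \<le> 3/8"
  shows "3 * w\<^sup>2 / 2 - 2 * w + F * (2 - w) - d * w ^ 3 - 4 * e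
    \<le> w\<^sup>2 * t\<^sup>2 / 2 - w * t * (2 - w) + p * (2 - w) - d * w ^ 3 * t\<^sup>2"
proof -
  define k where "k = w\<^sup>2 * (1/2 - d * w)"
  have k: "0 \<le> k" "k \<le> 1/2"
  proof -
    have "0 \<le> d * w" "d * w \<le> 3/8"
      using w d mult_mono[of d "3/8" w 1] by simp_all
    moreover have "w\<^sup>2 \<le> 1" using w by (simp add: power_le_one)
    ultimately show "0 \<le> k" "k \<le> 1/2"
      using mult_mono[of "w\<^sup>2" 1 "1/2 - d * w" "1/2"] by (auto simp: k_def)
  qed
  have "t\<^sup>2 = (t - 1)\<^sup>2 + 2 * (t - 1) + 1"
    by (simp add: power2_eq_square algebra_simps)
  then have "1 - 2 * e \<le> t\<^sup>2"
    using t zero_le_power2[of "t - 1"] by argo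
  then have "k * (1 - 2 * e) \<le> k * t\<^sup>2"
    using k(1) by (rule mult_left_mono)
  moreover have "k * t\<^sup>2 = w\<^sup>2 * t\<^sup>2 / 2 - d * w ^ 3 * t\<^sup>2"
    by (simp add: k_def algebra_simps power3_eq_cube power2_eq_square)
  moreover have "2 * e * k \<le> e"
    using k e_pos mult_left_mono[of k "1/2" "2 * e"] by simp
  ultimately have t_part: "k - e \<le> w\<^sup>2 * t\<^sup>2 / 2 - d * w ^ 3 * t\<^sup>2"
    by (simp add: algebra_simps)
  have "1 - w * (2 - w) = (1 - w)\<^sup>2"
    by (simp add: power2_eq_square algebra_simps)
  then have w2: "0 \<le> w * (2 - w)" "w * (2 - w) \<le> 1"
    using w zero_le_power2[of "1 - w"] by (simp, argo)
  have "w * (2 - w) * t \<le> w * (2 - w) * (1 + e)"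
    using t w2 by (intro mult_left_mono) auto
  moreover have "w * (2 - w) * e \<le> e"
    using w2 e_pos mult_right_mono[of "w * (2 - w)" 1 e] by simp
  ultimately have cross_part: "w * t * (2 - w) \<le> w * (2 - w) + e"
    by (simp add: algebra_simps)
  have "(F - e) * (2 - w) \<le> p * (2 - w)"
    using p w by (intro mult_right_mono) auto
  then have p_part: "F * (2 - w) - 2 * e \<le> p * (2 - w)"
    using mult_pos_pos[OF e_pos w(1)] by (simp add: left_diff_distrib right_diff_distrib)
  have "3 * w\<^sup>2 / 2 - 2 * w + F * (2 - w) - d * w ^ 3 = k - w * (2 - w) + F * (2 - w)"
    by (simp add: k_def field_simps power2_eq_square power3_eq_cube)
  then show ?thesis
    using t_part cross_part p_part by linarith
qed

lemma completed_square_coefficient: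
  assumes w: "0 < w" "w \<le> 1" and t: "\<bar>t - 1\<bar> \<le> e" and p: "\<bar>p - F\<bar> \<le> e"
  shows "m / 2 \<le> w\<^sup>2 * t\<^sup>2 / 2 - w * t * (2 - w) + p * (2 - w) - (1/4 + m/8) * w ^ 3 * t\<^sup>2"
proof -
  have "F - 1/2 - (1/4 + m/8) \<le> 3 * w\<^sup>2 / 2 - 2 * w + F * (2 - w) - (1/4 + m/8) * w ^ 3"
    using w m_pos m_le_F by (intro cubic_lower_bound) auto
  moreover have "3 * w\<^sup>2 / 2 - 2 * w + F * (2 - w) - (1/4 + m/8) * w ^ 3 - 4 * e
      \<le> w\<^sup>2 * t\<^sup>2 / 2 - w * t * (2 - w) + p * (2 - w) - (1/4 + m/8) * w ^ 3 * t\<^sup>2"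
    using m_pos m_le_one by (intro coefficient_perturbation[OF w t p]) auto
  ultimately show ?thesis
    using m_pos m_le_F e_small by linarith
qed

lemma bounds_near_one:
  assumes "\<bar>t - 1\<bar> \<le> e" and "\<bar>p - F\<bar> \<le> e"
  shows "19/20 \<le> t" "t \<le> 21/20" "3/4 \<le> p" "p \<le> F + 1"
  using assms m_pos m_le_one m_le_F e_small by auto

lemma gradient_coefficient_bounds:
  assumes w: "0 < w" "w \<le> 1" and t: "\<bar>t - 1\<bar> \<le> e" and p: "\<bar>p - F\<bar> \<le> e"
  shows "1/5 \<le> w * t\<^sup>2 / (2 * p) - w * t / p + 1"
    and "w * t\<^sup>2 / (2 * p) - w * t / p + 1 \<le> 2"
proof -
  note tp = bounds_near_one[OF t p]
  define q where "q = w * t / p"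
  have "t / p \<le> (21/20) / (3/4)"
    using tp by (intro frac_le) auto
  then have q: "0 \<le> q" "q \<le> 7/5"
    using w tp mult_mono[of w 1 "t / p" "7/5"] by (auto simp: q_def)
  have G: "w * t\<^sup>2 / (2 * p) - w * t / p + 1 = 1 - q + q * t / 2"
    by (simp add: q_def power2_eq_square field_simps)
  have "q * (1 - t / 2) \<le> 7/5 * (21/40)"
    using q tp by (intro mult_mono) auto
  then show "1/5 \<le> w * t\<^sup>2 / (2 * p) - w * t / p + 1"
    unfolding G by (simp add: algebra_simps)
  have "q * t / 2 \<le> 7/5 * (21/20) / 2"
    using q tp by (intro divide_right_mono mult_mono) auto
  then show "w * t\<^sup>2 / (2 * p) - w * t / p + 1 \<le> 2"
    unfolding G using q by linarith
qed

lemma scaled_energy_lower: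
  assumes w: "0 < w" "w \<le> 1" and t: "\<bar>t - 1\<bar> \<le> e" and p: "\<bar>p - F\<bar> \<le> e"
    and g: "0 \<le> g"
  shows "m / (8 * (F + 1)) * scaled_I_density w t p X Z g \<le> scaled_energy_density w t p X Z g"
proof -
  note tp = bounds_near_one[OF t p]
  define c where "c = m / (8 * (F + 1))"
  define d where "d = 1/4 + m/8"
  define Q where "Q = w\<^sup>2 * t\<^sup>2 / 2 - w * t * (2 - w) + p * (2 - w)"
  define G where "G = w * t\<^sup>2 / (2 * p) - w * t / p + 1"
  have d: "0 < d" "1 - 1 / (4 * d) = m / (2 + m)"
    using m_pos by (auto simp: d_def field_simps)
  \<comment> \<open>AM-GM splits the cross term between \<open>X\<^sup>2\<close> and \<open>Z\<^sup>2\<close>; the weight \<open>d\<close> leaves the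
    coefficient bounded in completed_square_coefficient on \<open>Z\<^sup>2\<close>.\<close>
  have "0 \<le> w / (4 * d) * (X - 2 * d * w * t * Z)\<^sup>2"
    using w d by simp
  also have "\<dots> = w * X\<^sup>2 / (4 * d) - w\<^sup>2 * t * X * Z + d * w ^ 3 * t\<^sup>2 * Z\<^sup>2"
    using d(1) by (simp add: field_simps power2_eq_square power3_eq_cube)
  finally have square: "0 \<le> w * X\<^sup>2 / (4 * d) - w\<^sup>2 * t * X * Z + d * w ^ 3 * t\<^sup>2 * Z\<^sup>2" .
  have "c \<le> m / (2 + m)"
    using m_pos m_le_one m_le_F by (auto simp: c_def intro: frac_le)
  then have X_part: "c * (w * X\<^sup>2) \<le> (1 - 1 / (4 * d)) * (w * X\<^sup>2)"
    using w d by (intro mult_right_mono) auto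
  have "p / t \<le> (F + 1) / (19/20)"
    using tp by (intro frac_le) auto
  then have "c * (p / t) \<le> c * ((F + 1) / (19/20))"
    using m_pos m_le_F by (intro mult_left_mono) (auto simp: c_def)
  also have "\<dots> \<le> m / 2"
    using m_pos m_le_F by (simp add: c_def field_simps)
  also have "\<dots> \<le> Q - d * w ^ 3 * t\<^sup>2"
    unfolding Q_def d_def using completed_square_coefficient[OF w t p] .
  finally have Z_part: "c * (p / t) * Z\<^sup>2 \<le> (Q - d * w ^ 3 * t\<^sup>2) * Z\<^sup>2"
    by (intro mult_right_mono) auto
  have "c \<le> 1/5"
    using m_pos m_le_one m_le_F by (auto simp: c_def field_simps)
  then have g_part: "c * (w * g) \<le> G * (w * g)"
    using gradient_coefficient_bounds(1)[OF w t p] w g by (intro mult_right_mono) (auto simp: G_def)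
  have "scaled_energy_density w t p X Z g = (1 - 1 / (4 * d)) * (w * X\<^sup>2) + (Q - d * w ^ 3 * t\<^sup>2) * Z\<^sup>2
      + G * (w * g) + (w * X\<^sup>2 / (4 * d) - w\<^sup>2 * t * X * Z + d * w ^ 3 * t\<^sup>2 * Z\<^sup>2)"
    using d(1) by (simp add: scaled_energy_density_def Q_def G_def field_simps)
  moreover have "c * scaled_I_density w t p X Z g = c * (w * X\<^sup>2) + c * (p / t) * Z\<^sup>2 + c * (w * g)"
    by (simp add: scaled_I_density_def algebra_simps)
  ultimately show ?thesis
    using square X_part Z_part g_part unfolding c_def by linarith
qed

lemma scaled_energy_upper:
  assumes w: "0 < w" "w \<le> 1" and t: "\<bar>t - 1\<bar> \<le> e" and p: "\<bar>p - F\<bar> \<le> e"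
    and g: "0 \<le> g"
  shows "scaled_energy_density w t p X Z g \<le> 8 * scaled_I_density w t p X Z g"
proof -
  note tp = bounds_near_one[OF t p]
  have "0 \<le> w * (X + w * t * Z / 2)\<^sup>2"
    using w by simp
  then have square: "- (w\<^sup>2 * t * X * Z) \<le> w * X\<^sup>2 + w ^ 3 * t\<^sup>2 / 4 * Z\<^sup>2"
    by (simp add: algebra_simps power2_eq_square power3_eq_cube)
  have "t\<^sup>2 \<le> (7/5)\<^sup>2"
    using tp by (intro power_mono) auto
  then have t2: "t\<^sup>2 \<le> 2"
    by (simp add: power_divide)
  have "w\<^sup>2 * t\<^sup>2 \<le> 1 * 2" "w ^ 3 * t\<^sup>2 \<le> 1 * 2"
    using w t2 by (intro mult_mono power_le_one; simp)+
  moreover have "0 \<le> w * t * (2 - w)"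
    using w tp by simp
  moreover have "p * (2 - w) \<le> p * 2"
    using w tp by simp
  ultimately have "w\<^sup>2 * t\<^sup>2 / 2 - w * t * (2 - w) + p * (2 - w) + w ^ 3 * t\<^sup>2 / 4 \<le> 4 * p"
    using tp by linarith
  also have "\<dots> \<le> 8 * (p / t)"
    using tp by (simp add: field_simps)
  finally have Z_part: "(w\<^sup>2 * t\<^sup>2 / 2 - w * t * (2 - w) + p * (2 - w) + w ^ 3 * t\<^sup>2 / 4) * Z\<^sup>2
      \<le> 8 * (p / t) * Z\<^sup>2"
    by (intro mult_right_mono) auto
  have g_part: "(w * t\<^sup>2 / (2 * p) - w * t / p + 1) * (w * g) \<le> 8 * (w * g)"
    using gradient_coefficient_bounds(2)[OF w t p] w g by (intro mult_right_mono) auto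
  have X_part: "2 * (w * X\<^sup>2) \<le> 8 * (w * X\<^sup>2)"
    using w by simp
  show ?thesis
    using square Z_part g_part X_part
    by (simp add: scaled_energy_density_def scaled_I_density_def algebra_simps)
qed

lemma energy_density_comparable:
  fixes f :: "real \<Rightarrow> real"
  assumes w: "0 < w" "w \<le> 1" and t: "\<bar>t - 1\<bar> \<le> e" and p: "\<bar>p - F\<bar> \<le> e" and g: "0 \<le> g"
    and R: "0 < R" "f R = p" "u * R = - (w * t / p)"
  shows "m / (8 * (F + 1)) * I_density u R A B g \<le> energy_density f w u R A B g"
    and "energy_density f w u R A B g \<le> 8 * I_density u R A B g"
proof -
  note tp = bounds_near_one[OF t p]
  have "0 < p" "0 < t" using tp by linarith+
  note scaled = energy_density_scaled[where f = f, OF w(1) R(1) \<open>0 < p\<close> \<open>0 < t\<close> R(2,3)]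
  have "w * (m / (8 * (F + 1)) * I_density u R A B g)
      = m / (8 * (F + 1)) * scaled_I_density w t p (u * A) (R * B) g"
    by (simp add: scaled(2)[symmetric])
  also have "\<dots> \<le> scaled_energy_density w t p (u * A) (R * B) g"
    by (rule scaled_energy_lower[OF w t p g])
  also have "\<dots> = w * energy_density f w u R A B g"
    by (rule scaled(1)[symmetric])
  finally show "m / (8 * (F + 1)) * I_density u R A B g \<le> energy_density f w u R A B g"
    using w(1) by (rule mult_left_le_imp_le)
  have "w * energy_density f w u R A B g = scaled_energy_density w t p (u * A) (R * B) g"
    by (rule scaled(1))
  also have "\<dots> \<le> 8 * scaled_I_density w t p (u * A) (R * B) g"
    by (rule scaled_energy_upper[OF w t p g])
  also have "\<dots> = w * (8 * I_density u R A B g)"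
    by (simp add: scaled(2)[symmetric])
  finally show "energy_density f w u R A B g \<le> 8 * I_density u R A B g"
    using w(1) by (rule mult_left_le_imp_le)
qed

end

lemma real_analytic_on_continuous_within:
  assumes "real_analytic_on A g" and "x \<in> A"
  shows "continuous (at x within A) g"
proof -
  obtain \<delta> c where "\<delta> > 0"
    and sums: "\<And>y. y \<in> A \<Longrightarrow> \<bar>y - x\<bar> < \<delta> \<Longrightarrow> (\<lambda>n. c n * (y - x) ^ n) sums g y"
    using assms unfolding real_analytic_on_def by metis
  show ?thesis
  proof (cases "\<exists>y\<in>A. y \<noteq> x \<and> \<bar>y - x\<bar> < \<delta>")
    case False
    then have "eventually (\<lambda>_. False) (at x within A)"
      using \<open>\<delta> > 0\<close> by (auto simp: eventually_at dist_real_def)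
    then show ?thesis
      by (simp add: continuous_within trivial_limit_def[symmetric] eventually_False)
  next
    case True
    then obtain y where y: "y \<in> A" "y \<noteq> x" "\<bar>y - x\<bar> < \<delta>" by blast
    define \<rho> where "\<rho> = \<bar>y - x\<bar>"
    have "\<rho> > 0" using y by (simp add: \<rho>_def)
    have summable_\<rho>: "summable (\<lambda>n. c n * (y - x) ^ n)"
      using sums[OF y(1,3)] by (rule sums_summable)
    define G where "G h = (\<Sum>n. c n * h ^ n)" for h
    have G_sums: "(\<lambda>n. c n * h ^ n) sums G h" if "norm h < \<rho>" for h
      unfolding G_def
      by (rule summable_sums, rule powser_inside[OF summable_\<rho>]) (use that in \<open>simp add: \<rho>_def\<close>)
    have G_lim: "(G \<longlongrightarrow> c 0) (at 0)"
      by (rule powser_limit_0[OF \<open>\<rho> > 0\<close> G_sums])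
    have "((\<lambda>z. G (z - x)) \<longlongrightarrow> c 0) (at x within A)"
      using tendsto_within_subset[OF LIM_offset[where k="-x", OF G_lim]] by simp
    moreover have "c 0 = g x"
      using sums[OF assms(2)] \<open>\<delta> > 0\<close> powser_sums_zero[of c] by (simp add: sums_unique2)
    moreover have "eventually (\<lambda>z. G (z - x) = g z) (at x within A)"
      unfolding eventually_at
    proof (intro exI conjI ballI impI)
      fix z assume "z \<in> A" "z \<noteq> x \<and> dist z x < \<rho>"
      then show "G (z - x) = g z"
        using sums_unique2[OF G_sums sums] y by (auto simp: \<rho>_def dist_real_def)
    qed (rule \<open>\<rho> > 0\<close>)
    ultimately show ?thesis
      unfolding continuous_within by (auto intro: tendsto_cong[THEN iffD1])
  qed
qed

(* rs is the tortoise coordinate r_* as a function of r = 1/R; of f only positivity and continuity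
   at R = 0 are needed. *)
locale tortoise_coordinate =
  fixes a :: real and f rs :: "real \<Rightarrow> real"
  assumes a_pos: "0 < a"
    and f_pos: "\<forall>R\<in>{0..<a}. 0 < f R"
    and rs_deriv: "\<forall>r>1 / a. (rs has_real_derivative 1 / f (1 / r)) (at r)"
    and f_continuous: "continuous (at 0 within {0..<a}) f"
begin

lemma inverse_in_domain:
  assumes "1 / a < r" shows "0 < 1 / r" and "1 / r < a"
proof -
  have "0 < r" using assms a_pos by (smt (verit) divide_pos_pos)
  then show "0 < 1 / r" and "1 / r < a"
    using assms a_pos by (simp_all add: field_simps)
qed

lemma f_inverse_pos:
  assumes "1 / a < r" shows "0 < f (1 / r)"
  using f_pos inverse_in_domain[OF assms] by simp

lemma f_0_pos: "0 < f 0"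
  using f_pos a_pos by simp

lemma f_inverse_tendsto: "((\<lambda>r. f (1 / r)) \<longlongrightarrow> f 0) at_top"
proof -
  have "filterlim (\<lambda>r::real. 1 / r) (at 0 within {0..<a}) at_top"
    unfolding filterlim_at
  proof
    show "eventually (\<lambda>r. 1 / r \<in> {0..<a} \<and> 1 / r \<noteq> 0) at_top"
      using eventually_gt_at_top[of "1 / a"] by eventually_elim (use inverse_in_domain in fastforce)
    show "((\<lambda>r::real. 1 / r) \<longlongrightarrow> 0) at_top"
      by (rule tendsto_divide_0[OF tendsto_const filterlim_at_top_imp_at_infinity[OF filterlim_ident]])
  qed
  then show ?thesis
    using f_continuous by (auto simp: continuous_within intro: filterlim_compose)
qed

lemma rs_strict_mono:
  assumes "1 / a < x" and "x < y" shows "rs x < rs y"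
proof (rule DERIV_pos_imp_increasing[OF \<open>x < y\<close>])
  fix z assume "x \<le> z"
  then have "1 / a < z" using assms by linarith
  then show "\<exists>l. (rs has_real_derivative l) (at z) \<and> 0 < l"
    using rs_deriv f_inverse_pos by auto
qed

lemma rs_div_tendsto: "((\<lambda>r. rs r / r) \<longlongrightarrow> 1 / f 0) at_top"
proof (rule lhospital_at_top_at_top[where g' = "\<lambda>_. 1" and f' = "\<lambda>r. 1 / f (1 / r)"])
  show "eventually (\<lambda>r. (rs has_real_derivative 1 / f (1 / r)) (at r)) at_top"
    using eventually_gt_at_top[of "1 / a"] by eventually_elim (use rs_deriv in auto)
  show "((\<lambda>r. 1 / f (1 / r) / 1) \<longlongrightarrow> 1 / f 0) at_top"
    using tendsto_divide[OF tendsto_const f_inverse_tendsto] f_0_pos by simp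
qed (auto intro: filterlim_ident)

lemma tortoise_ratio_tendsto: "((\<lambda>r. rs r * f (1 / r) / r) \<longlongrightarrow> 1) at_top"
proof -
  have "((\<lambda>r. rs r / r * f (1 / r)) \<longlongrightarrow> 1 / f 0 * f 0) at_top"
    by (rule tendsto_mult[OF rs_div_tendsto f_inverse_tendsto])
  then show ?thesis
    using f_0_pos by simp
qed

lemma rs_at_top: "filterlim rs at_top at_top"
proof -
  have "filterlim (\<lambda>r. rs r / r * r) at_top at_top"
    by (rule filterlim_tendsto_pos_mult_at_top[OF rs_div_tendsto _ filterlim_ident])
      (simp add: f_0_pos)
  moreover have "eventually (\<lambda>r. rs r / r * r = rs r) at_top"
    using eventually_gt_at_top[of 0] by eventually_elim simp
  ultimately show ?thesis
    by (auto intro: filterlim_cong[THEN iffD1])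
qed

lemma rs_attains:
  assumes "1 / a < r0" and "rs r0 \<le> y"
  obtains r where "r0 \<le> r" and "rs r = y"
proof -
  obtain b where b: "\<And>r. b \<le> r \<Longrightarrow> y \<le> rs r"
    using rs_at_top[unfolded filterlim_at_top] eventually_at_top_linorder by metis
  have "\<exists>r. r0 \<le> r \<and> r \<le> max r0 b \<and> rs r = y"
  proof (rule IVT)
    show "\<forall>r. r0 \<le> r \<and> r \<le> max r0 b \<longrightarrow> isCont rs r"
      using assms(1) rs_deriv by (meson DERIV_isCont order.strict_trans2)
  qed (use assms b in auto)
  then show ?thesis using that by blast
qed

lemma R_on_H_tortoise:
  assumes "0 < s" and "1 / a < r"
  shows "R_on_H a rs s (- s * rs r) = 1 / r"
  unfolding R_on_H_def
proof (simp add: \<open>0 < s\<close>[THEN less_imp_neq, symmetric], rule the_equality)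
  show "0 < 1 / r \<and> 1 / r < a \<and> rs r = rs (1 / (1 / r))"
    using inverse_in_domain[OF assms(2)] by simp
next
  fix R assume R: "0 < R \<and> R < a \<and> rs r = rs (1 / R)"
  have "1 / a < 1 / R" using R by (simp add: frac_less2)
  then have "1 / R = r"
    using R assms(2) rs_strict_mono by (metis linorder_neq_iff less_irrefl)
  then show "R = 1 / r" by auto
qed

lemma tortoise_bounds_eventually:
  assumes "0 < e"
  obtains r0 where "1 / a < r0"
    and "\<And>r. r0 \<le> r \<Longrightarrow> \<bar>f (1 / r) - f 0\<bar> \<le> e \<and> \<bar>rs r * f (1 / r) / r - 1\<bar> \<le> e"
proof -
  have "eventually (\<lambda>r. 1 / a < r \<and> \<bar>f (1 / r) - f 0\<bar> \<le> e \<and> \<bar>rs r * f (1 / r) / r - 1\<bar> \<le> e) at_top"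
    using eventually_gt_at_top[of "1 / a"]
      tendstoD[OF f_inverse_tendsto \<open>0 < e\<close>] tendstoD[OF tortoise_ratio_tendsto \<open>0 < e\<close>]
    by eventually_elim (auto simp: dist_real_def)
  then obtain r0 where "\<And>r. r0 \<le> r \<Longrightarrow> 1 / a < r \<and> \<bar>f (1 / r) - f 0\<bar> \<le> e \<and> \<bar>rs r * f (1 / r) / r - 1\<bar> \<le> e"
    unfolding eventually_at_top_linorder by blast
  then show ?thesis
    using that by blast
qed

lemma R_on_H_far:
  assumes "1 / a < r0" and "u < - \<bar>rs r0\<bar>" and "0 < s" and "s \<le> 1"
  obtains r where "r0 \<le> r" and "u = - s * rs r" and "R_on_H a rs s u = 1 / r"
proof -
  have "- u * s \<le> - u"
    using assms by (intro mult_left_le) auto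
  then have "- u \<le> - u / s"
    using assms(3) by (simp add: pos_divide_le_eq)
  then have "rs r0 \<le> - u / s"
    using assms(2) abs_ge_self[of "rs r0"] by linarith
  then obtain r where r: "r0 \<le> r" "rs r = - u / s"
    by (rule rs_attains[OF assms(1)])
  then have "u = - s * rs r"
    using assms(3) by simp
  moreover have "R_on_H a rs s u = 1 / r"
    using R_on_H_tortoise[OF assms(3)] assms(1) r(1) calculation by simp
  ultimately show ?thesis
    using that r(1) by blast
qed

lemma energy_density_comparable_on_H:
  assumes m: "0 < m" "m \<le> 1" "m \<le> f 0 - 3/4" and r: "1 / a < r"
    and near: "\<bar>f (1 / r) - f 0\<bar> \<le> m / 20" "\<bar>rs r * f (1 / r) / r - 1\<bar> \<le> m / 20"
    and s: "0 < s" "s \<le> 1" and g: "0 \<le> g"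
  shows "m / (8 * (f 0 + 1)) * I_density (- s * rs r) (1 / r) A B g
      \<le> energy_density f s (- s * rs r) (1 / r) A B g"
    and "energy_density f s (- s * rs r) (1 / r) A B g \<le> 8 * I_density (- s * rs r) (1 / r) A B g"
proof -
  have R: "0 < 1 / r" "0 < f (1 / r)"
    using inverse_in_domain[OF r] f_inverse_pos[OF r] by auto
  have uR: "- s * rs r * (1 / r) = - (s * (rs r * f (1 / r) / r) / f (1 / r))"
    using R by (simp add: field_simps)
  have e: "0 < m / 20" "20 * (m / 20) \<le> m"
    using m by auto
  show "m / (8 * (f 0 + 1)) * I_density (- s * rs r) (1 / r) A B g
      \<le> energy_density f s (- s * rs r) (1 / r) A B g"
    and "energy_density f s (- s * rs r) (1 / r) A B g \<le> 8 * I_density (- s * rs r) (1 / r) A B g"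
    using energy_density_comparable[where f = f, OF m e s near(2,1) g R(1) refl uR] by simp_all
qed

lemma energy_density_comparable_near_scri:
  assumes "3/4 < f 0"
  obtains U c where "U < 0" and "0 < c" and "c < 8"
    and "\<And>u s A B g. u < U \<Longrightarrow> s \<in> {0..1} \<Longrightarrow> 0 \<le> g \<Longrightarrow>
      c * I_density u (R_on_H a rs s u) A B g \<le> energy_density f s u (R_on_H a rs s u) A B g \<and>
      energy_density f s u (R_on_H a rs s u) A B g \<le> 8 * I_density u (R_on_H a rs s u) A B g"
proof -
  define m where "m = min (f 0 - 3/4) 1"
  have m: "0 < m" "m \<le> 1" "m \<le> f 0 - 3/4"
    using assms by (auto simp: m_def)
  obtain r0 where r0: "1 / a < r0"
    and near: "\<And>r. r0 \<le> r \<Longrightarrow> \<bar>f (1 / r) - f 0\<bar> \<le> m / 20 \<and> \<bar>rs r * f (1 / r) / r - 1\<bar> \<le> m / 20"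
    using tortoise_bounds_eventually[of "m / 20"] m by auto
  define c where "c = m / (8 * (f 0 + 1))"
  have c: "0 < c" "c \<le> 1"
    using m assms by (simp_all add: c_def)
  show ?thesis
  proof (rule that[of "- \<bar>rs r0\<bar> - 1" c])
    fix u s A B g :: real assume u: "u < - \<bar>rs r0\<bar> - 1" and s: "s \<in> {0..1}" and g: "0 \<le> g"
    show "c * I_density u (R_on_H a rs s u) A B g \<le> energy_density f s u (R_on_H a rs s u) A B g \<and>
      energy_density f s u (R_on_H a rs s u) A B g \<le> 8 * I_density u (R_on_H a rs s u) A B g"
    proof (cases "s = 0")
      case True
      have "0 \<le> I_density u 0 A B g"
        using g by (simp add: I_density_def)
      then show ?thesis
        using True c by (simp add: R_on_H_def energy_density_at_scri mult_left_le_one_le)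
    next
      case False
      then have "0 < s" "s \<le> 1" using s by auto
      moreover have "u < - \<bar>rs r0\<bar>"
        using u by linarith
      ultimately obtain r where r: "r0 \<le> r" "u = - s * rs r" "R_on_H a rs s u = 1 / r"
        using R_on_H_far[OF r0] by blast
      have "1 / a < r" using r0 r by linarith
      from energy_density_comparable_on_H[OF m this near[OF r(1), THEN conjunct1]
          near[OF r(1), THEN conjunct2] \<open>0 < s\<close> \<open>s \<le> 1\<close> g]
      show ?thesis
        unfolding r(3) by (simp add: r(2) c_def)
    qed
  qed (use c in simp_all)
qed

end

lemma integrands_comparable:
  assumes density_bounds: "\<And>u A B g. u < u0 \<Longrightarrow> 0 \<le> g \<Longrightarrow>
      c * I_density u (R_on_H a rs s u) A B g \<le> energy_density f s u (R_on_H a rs s u) A B g \<and>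
      energy_density f s u (R_on_H a rs s u) A B g \<le> C * I_density u (R_on_H a rs s u) A B g"
    and "q \<in> param_dom u0"
  shows "c * I_integrand a rs s \<phi> q \<le> E_integrand a f rs s \<phi> q \<and>
    E_integrand a f rs s \<phi> q \<le> C * I_integrand a rs s \<phi> q"
proof -
  obtain u \<theta> \<psi> where q: "q = (u, \<theta>, \<psi>)"
    by (cases q)
  have "u < u0" "0 \<le> sin \<theta>"
    using assms(2) by (auto simp: q param_dom_def intro: sin_ge_zero)
  define R where "R = R_on_H a rs s u"
  define x where "x = sph \<theta> \<psi>"
  have "0 \<le> grad_S2_sq \<phi> u R \<theta> \<psi>"
    by (simp add: grad_S2_sq_def)
  note bounds = density_bounds[OF \<open>u < u0\<close> this, of "d_u \<phi> u R x" "d_R \<phi> u R x", folded R_def]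
  have "I_integrand a rs s \<phi> q
      = I_density u R (d_u \<phi> u R x) (d_R \<phi> u R x) (grad_S2_sq \<phi> u R \<theta> \<psi>) * sin \<theta>"
    by (simp add: I_integrand_def I_density_def q R_def x_def Let_def)
  moreover have "E_integrand a f rs s \<phi> q
      = energy_density f s u R (d_u \<phi> u R x) (d_R \<phi> u R x) (grad_S2_sq \<phi> u R \<theta> \<psi>) * sin \<theta>"
    by (simp add: E_integrand_def q R_def x_def Let_def)
  ultimately show ?thesis
    using bounds \<open>0 \<le> sin \<theta>\<close> by (simp add: mult.assoc[symmetric] mult_right_mono)
qed

theorem proposition2:
  fixes a :: real and f rs :: "real \<Rightarrow> real"
  assumes a_pos: "a > 0"
    and f_an: "real_analytic_on {0..<a} f"
    and f_pos: "\<forall>R\<in>{0..<a}. f R > 0"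
    and rs_deriv: "\<forall>r>1 / a. (rs has_real_derivative 1 / f (1 / r)) (at r)"
    and f0: "f 0 > 3 / 4"
  shows "\<exists>U<0. \<exists>c C. 0 < c \<and> c \<le> C \<and>
     (\<forall>u0<U. \<forall>s\<in>{0..1}. \<forall>\<phi> :: point \<Rightarrow> real.
        (\<exists>S. open S \<and> Omega_closure a rs u0 \<subseteq> S \<and> smooth_on S \<phi>) \<longrightarrow>
          ereal c * I_norm a rs s u0 \<phi> \<le> energy_flux a f rs s u0 \<phi> \<and>
          energy_flux a f rs s u0 \<phi> \<le> ereal C * I_norm a rs s u0 \<phi>)"
proof -
  interpret tortoise_coordinate a f rs
    using a_pos f_pos rs_deriv real_analytic_on_continuous_within[OF f_an] by unfold_locales auto
  obtain U c where "U < 0" and c: "0 < c" "c < 8"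
    and density_bounds: "\<And>u s A B g. u < U \<Longrightarrow> s \<in> {0..1} \<Longrightarrow> 0 \<le> g \<Longrightarrow>
      c * I_density u (R_on_H a rs s u) A B g \<le> energy_density f s u (R_on_H a rs s u) A B g \<and>
      energy_density f s u (R_on_H a rs s u) A B g \<le> 8 * I_density u (R_on_H a rs s u) A B g"
    using energy_density_comparable_near_scri[OF f0] by blast
  have "ereal c * I_norm a rs s u0 \<phi> \<le> energy_flux a f rs s u0 \<phi> \<and>
      energy_flux a f rs s u0 \<phi> \<le> ereal 8 * I_norm a rs s u0 \<phi>"
    if "u0 < U" "s \<in> {0..1}" for u0 s \<phi>
  proof -
    have "c * I_integrand a rs s \<phi> q \<le> E_integrand a f rs s \<phi> q \<and>
        E_integrand a f rs s \<phi> q \<le> 8 * I_integrand a rs s \<phi> q" if "q \<in> param_dom u0" for q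
      using density_bounds[OF order.strict_trans[OF _ \<open>u0 < U\<close>] \<open>s \<in> {0..1}\<close>] that
      by (rule integrands_comparable)
    from ext_integral_comparable[OF this c] show ?thesis
      unfolding energy_flux_def I_norm_def by simp
  qed
  then show ?thesis
    using \<open>U < 0\<close> c by (intro exI[of _ U] conjI exI[of _ c] exI[of _ 8]) auto
qed

end
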